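(* Let $N$ be an even positive integer and $\hbar=1/(2\pi N)$. Then for every $m\in\{0,\dots,N-1\}$, $XF\Phi_m^{(0,0)}=F\Phi_m^{(0,0)}$ and $YF\Phi_m^{(0,0)}=F\Phi_m^{(0,0)}$.
   Context: On $L^2(\mathbb{R})$ with $[\widehat{x},\widehat{p}]=i\hbar$, $|x\rangle_x$ are position eigen-distributions. $\Phi_m^{(0,0)}=N^{-1/2}\sum_{k\in\mathbb{Z}}|m/N+k\rangle_x$ (periodic $\delta$-comb). $X^s=e^{is\widehat{x}/\hbar}$, $Y^s=e^{is\widehat{p}/\hbar}$ for real $s$ (so $X=e^{2\pi iN\widehat{x}}$, $Y=e^{2\pi iN\widehat{p}}$). Projections $L,R,E_x,O_x$ are multiplication in position representation by the indicators of $[0,1/2)+\mathbb{Z}$, $[1/2,1)+\mathbb{Z}$, $[0,1)+2\mathbb{Z}$, $[1,2)+2\mathbb{Z}$; $B,T,E_p,O_p$ are the analogous projections in momentum representation onto $[0,1/2)+\mathbb{Z}$, $[1/2,1)+\mathbb{Z}$, $[0,1)+2\mathbb{Z}$, $[1,2)+2\mathbb{Z}$; these act on $\delta$-comb distributions by pointwise multiplication by the indicator at the support points. $S=\exp\!\left(-\frac{i\log2}{2\hbar}(\widehat{x}\widehat{p}+\widehat{p}\widehat{x})\right)$, acting on distributions by $S|x\rangle_x=\sqrt2\,|2x\rangle_x$ (so $S^\dagger\widehat{x}S=2\widehat{x}$). The propagator is $F=S(L+X^{-1}R)(E_p+Y^{-1/2}O_p)$, which the paper also writes as $(E_x+X^{-1/2}O_x)(B+Y^{-1}T)S$.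 *)

theory Defs
  imports Complex_Main
begin

text \<open>
A state that is a (possibly infinite) linear combination of position
eigen-distributions, sum over x of c(x) |x>_x, is represented by its
coefficient function c :: real => complex.  All states occurring here are
periodic delta-combs: supported on a lattice a*Z and periodic with period K*a.
\<close>

definition comb_ok :: "real \<Rightarrow> nat \<Rightarrow> (real \<Rightarrow> complex) \<Rightarrow> bool" where
  "comb_ok a K c \<longleftrightarrow> a > 0 \<and> K > 0 \<and>
     (\<forall>x. c x \<noteq> 0 \<longrightarrow> x \<in> range (\<lambda>j::int. a * of_int j)) \<and>
     (\<forall>x. c (x + real K * a) = c x)"

text \<open>Fourier transform of a periodic delta-comb (sigma = 1: position to momentum
  representation, with <p|x> = (2 pi hbar)^(-1/2) e^(-ipx/hbar); sigma = -1: the inverse).\<close>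

definition comb_ft :: "real \<Rightarrow> real \<Rightarrow> (real \<Rightarrow> complex) \<Rightarrow> real \<Rightarrow> complex" where
  "comb_ft hbar \<sigma> c p =
     (if \<exists>a K. comb_ok a K c then
        (case (SOME aK. comb_ok (fst aK) (snd aK) c) of (a, K) \<Rightarrow>
          (let b = real K * a in
            if p \<in> range (\<lambda>l::int. 2 * pi * hbar * of_int l / b) then
              complex_of_real (1 / sqrt (2 * pi * hbar) * (2 * pi * hbar / b)) *
              (\<Sum>j<K. c (real j * a) * cis (- \<sigma> * p * (real j * a) / hbar))
            else 0))
      else 0)"

definition to_mom :: "real \<Rightarrow> (real \<Rightarrow> complex) \<Rightarrow> real \<Rightarrow> complex" where
  "to_mom hbar = comb_ft hbar 1"

definition from_mom :: "real \<Rightarrow> (real \<Rightarrow> complex) \<Rightarrow> real \<Rightarrow> complex" where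
  "from_mom hbar = comb_ft hbar (-1)"

definition pos_proj :: "real set \<Rightarrow> (real \<Rightarrow> complex) \<Rightarrow> real \<Rightarrow> complex" where
  "pos_proj A c = (\<lambda>x. if x \<in> A then c x else 0)"

definition mom_proj :: "real \<Rightarrow> real set \<Rightarrow> (real \<Rightarrow> complex) \<Rightarrow> real \<Rightarrow> complex" where
  "mom_proj hbar A c = from_mom hbar (\<lambda>p. if p \<in> A then to_mom hbar c p else 0)"

definition setL :: "real set" where "setL = {x. \<exists>k::int. x - of_int k \<in> {0..<1/2}}"
definition setR :: "real set" where "setR = {x. \<exists>k::int. x - of_int k \<in> {1/2..<1}}"
definition setE :: "real set" where "setE = {x. \<exists>k::int. x - 2 * of_int k \<in> {0..<1}}"
definition setO :: "real set" where "setO = {x. \<exists>k::int. x - 2 * of_int k \<in> {1..<2}}"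

text \<open>X^s = exp(i s x / hbar), Y^s = exp(i s p / hbar) (translation: Y^s |x> = |x - s>),
  S |x> = sqrt 2 |2x>.\<close>

definition Xpow :: "real \<Rightarrow> real \<Rightarrow> (real \<Rightarrow> complex) \<Rightarrow> real \<Rightarrow> complex" where
  "Xpow hbar s c = (\<lambda>x. cis (s * x / hbar) * c x)"

definition Ypow :: "real \<Rightarrow> (real \<Rightarrow> complex) \<Rightarrow> real \<Rightarrow> complex" where
  "Ypow s c = (\<lambda>y. c (y + s))"

definition Sop :: "(real \<Rightarrow> complex) \<Rightarrow> real \<Rightarrow> complex" where
  "Sop c = (\<lambda>y. complex_of_real (sqrt 2) * c (y / 2))"

text \<open>Propagator F = S (L + X^(-1) R)(E_p + Y^(-1/2) O_p), with X = X^(2 pi N hbar),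
  Y = Y^(2 pi N hbar).\<close>

definition Fop :: "real \<Rightarrow> nat \<Rightarrow> (real \<Rightarrow> complex) \<Rightarrow> real \<Rightarrow> complex" where
  "Fop hbar N c =
     (let s = 2 * pi * real N * hbar;
          c1 = (\<lambda>x. mom_proj hbar setE c x + Ypow (- s / 2) (mom_proj hbar setO c) x)
      in Sop (\<lambda>x. pos_proj setL c1 x + Xpow hbar (- s) (pos_proj setR c1) x))"

definition Phi :: "nat \<Rightarrow> nat \<Rightarrow> real \<Rightarrow> complex" where
  "Phi N m = (\<lambda>x. if x \<in> range (\<lambda>k::int. real m / real N + of_int k)
                  then complex_of_real (1 / sqrt (real N)) else 0)"

end

theory Submission
  imports Defs "HOL-Library.Real_Mod"
begin

(*
  All states involved are periodic delta-combs, and on such combs every factor of F acts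
  by explicit finite sums. Phi_m^(0,0) is supported on (1/N)Z with period 1; for
  hbar = 1/(2 pi N) its momentum representation is again a comb on (1/N)Z with period 1.
  Cutting it with E_p, O_p, shifting the O_p part by Y^(-1/2) and transforming back gives a
  comb g on (1/2N)Z with g(x + 1/2) = e^(2 pi i N x) g(x); here N even is used. The factor
  L + X^(-1) R cancels exactly this phase, so the result is 1/2-periodic and supported on
  (1/2N)Z. After the dilation S it is 1-periodic, i.e. Y-invariant, and supported on (1/N)Z,
  where X = e^(2 pi i N x) is 1.
*)

lemma cis_2pi_periodic: "a = b + 2 * pi * of_int k \<Longrightarrow> cis a = cis b"
  by (simp flip: cis_mult)

lemma sum_cis_roots_of_unity:
  assumes "n > 0"
  shows "(\<Sum>q<n. cis (2 * pi * of_int l * real q / real n)) = (if int n dvd l then of_nat n else 0)"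
proof -
  define z where "z = cis (2 * pi * of_int l / real n)"
  have sum: "(\<Sum>q<n. cis (2 * pi * of_int l * real q / real n)) = (\<Sum>q<n. z ^ q)"
    by (simp add: z_def DeMoivre mult_ac)
  have zn: "z ^ n = 1"
    using assms by (simp add: z_def DeMoivre)
  have "z = 1 \<longleftrightarrow> (\<exists>k::int. of_int l / real n = of_int k)"
    using assms by (auto simp: z_def cis_eq_1_iff field_simps)
  also have "\<dots> \<longleftrightarrow> of_int l / of_int (int n) \<in> (\<int> :: real set)"
    by (auto elim!: Ints_cases)
  also have "\<dots> \<longleftrightarrow> int n dvd l"
    using assms by (simp only: of_int_div_of_int_in_Ints_iff) simp
  finally show ?thesis
    unfolding sum using zn by (simp add: sum_gp_strict)
qed

lemma sum_lessThan_mult_blocks: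
  fixes f :: "nat \<Rightarrow> 'a::comm_monoid_add"
  shows "(\<Sum>j<n * K. f j) = (\<Sum>q<n. \<Sum>i<K. f (i + q * K))"
proof -
  have "(\<Sum>j<n * K. f j) = (\<Sum>q<n. sum f {q * K..<q * K + K})"
    by (rule sum.nat_group[symmetric])
  also have "\<dots> = (\<Sum>q<n. \<Sum>i<K. f (i + q * K))"
  proof (rule sum.cong)
    fix q
    have "{q * K..<q * K + K} = {0 + q * K..<K + q * K}"
      by (simp add: add.commute)
    then show "sum f {q * K..<q * K + K} = (\<Sum>i<K. f (i + q * K))"
      by (simp only: sum.shift_bounds_nat_ivl atLeast0LessThan)
  qed simp
  finally show ?thesis .
qed

section \<open>Periodic delta-combs and their Fourier transform\<close>

definition lattice :: "real \<Rightarrow> real set" where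
  "lattice d = range (\<lambda>l::int. d * of_int l)"

lemma add_mem_lattice_iff: "x + d * of_int k \<in> lattice d \<longleftrightarrow> x \<in> lattice d"
proof
  assume "x + d * of_int k \<in> lattice d"
  then obtain l :: int where "x + d * of_int k = d * of_int l"
    unfolding lattice_def by blast
  then have "x = d * of_int (l - k)"
    by (simp add: algebra_simps)
  then show "x \<in> lattice d"
    unfolding lattice_def by blast
next
  assume "x \<in> lattice d"
  then obtain l :: int where "x = d * of_int l"
    unfolding lattice_def by blast
  then have "x + d * of_int k = d * of_int (l + k)"
    by (simp add: algebra_simps)
  then show "x + d * of_int k \<in> lattice d"
    unfolding lattice_def by blast
qed

lemma lattice_subset_refine:
  assumes "n > 0"
  shows "lattice d \<subseteq> lattice (d / real n)"
proof
  fix x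
  assume "x \<in> lattice d"
  then obtain l :: int where "x = d * of_int l"
    unfolding lattice_def by blast
  then have "x = d / real n * of_int (int n * l)"
    using assms by simp
  then show "x \<in> lattice (d / real n)"
    unfolding lattice_def by blast
qed

lemma refined_mem_lattice_iff_dvd:
  assumes "n > 0" "d \<noteq> 0"
  shows "d / real n * of_int l \<in> lattice d \<longleftrightarrow> int n dvd l"
proof
  assume "d / real n * of_int l \<in> lattice d"
  then obtain k :: int where "d / real n * of_int l = d * of_int k"
    unfolding lattice_def by blast
  then have "of_int l = real n * of_int k"
    using assms by (simp add: field_simps)
  then have "l = int n * k"
    by (metis of_int_eq_iff of_int_mult of_int_of_nat_eq)
  then show "int n dvd l" ..
next
  assume "int n dvd l"
  then obtain k where "l = int n * k" ..
  then have "d / real n * of_int l = d * of_int k"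
    using assms by simp
  then show "d / real n * of_int l \<in> lattice d"
    unfolding lattice_def by blast
qed

lemma comb_ok_iff:
  "comb_ok a K c \<longleftrightarrow>
     a > 0 \<and> K > 0 \<and> (\<forall>x. c x \<noteq> 0 \<longrightarrow> x \<in> lattice a) \<and> (\<forall>x. c (x + real K * a) = c x)"
  by (simp add: comb_ok_def lattice_def)

text \<open>The transform comb_ft of a comb, computed from an explicitly given lattice spacing a
  and period count K instead of the ones chosen by SOME.\<close>

definition comb_ft_wrt :: "real \<Rightarrow> real \<Rightarrow> real \<Rightarrow> nat \<Rightarrow> (real \<Rightarrow> complex) \<Rightarrow> real \<Rightarrow> complex" where
  "comb_ft_wrt h \<sigma> a K c p =
     (if p \<in> lattice (2 * pi * h / (real K * a)) then
        complex_of_real (1 / sqrt (2 * pi * h) * (2 * pi * h / (real K * a))) *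
        (\<Sum>j<K. c (real j * a) * cis (- \<sigma> * p * (real j * a) / h))
      else 0)"

lemma comb_ok_refine:
  assumes "comb_ok a K c" "M > 0"
  shows "comb_ok (a / real M) (M * K) c"
  using assms lattice_subset_refine[of M a] by (auto simp: comb_ok_iff)

lemma comb_ok_periodic:
  assumes "comb_ok a K c"
  shows "c (x + real q * (real K * a)) = c x"
proof (induction q)
  case (Suc q)
  have "c (x + real (Suc q) * (real K * a)) = c ((x + real q * (real K * a)) + real K * a)"
    by (simp add: algebra_simps)
  also have "\<dots> = c (x + real q * (real K * a))"
    using assms unfolding comb_ok_iff by blast
  finally show ?case
    using Suc by simp
qed simp

lemma comb_ft_wrt_refine:
  assumes ok: "comb_ok a K c" and M: "M > 0"
  shows "comb_ft_wrt h \<sigma> (a / real M) (M * K) c p = comb_ft_wrt h \<sigma> a K c p"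
proof -
  have a: "a > 0"
    using ok by (simp add: comb_ok_iff)
  define f where "f j = c (real j * (a / real M)) * cis (- \<sigma> * p * (real j * (a / real M)) / h)" for j
  have off_sublattice: "f j = 0" if "j \<notin> (\<lambda>i. M * i) ` {..<K}" "j < M * K" for j
  proof (rule ccontr)
    assume "f j \<noteq> 0"
    then have "c (real j * (a / real M)) \<noteq> 0"
      by (auto simp: f_def)
    then obtain l :: int where "real j * (a / real M) = a * of_int l"
      using ok unfolding comb_ok_iff lattice_def by blast
    then have "real j = real M * of_int l"
      using a M by (simp add: field_simps)
    then have "int j = int M * l"
      by (metis of_int_eq_iff of_int_mult of_int_of_nat_eq)
    then have "j = M * nat l"
      using nat_mult_distrib[of "int M" l] by simp
    then show False
      using that M by auto
  qed
  have "(\<Sum>i<K. c (real i * a) * cis (- \<sigma> * p * (real i * a) / h)) = (\<Sum>i<K. f (M * i))"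
    using M by (simp add: f_def)
  also have "\<dots> = (\<Sum>j\<in>(\<lambda>i. M * i) ` {..<K}. f j)"
    using M by (simp add: sum.reindex inj_on_def)
  also have "\<dots> = (\<Sum>j<M * K. f j)"
    by (rule sum.mono_neutral_left) (use M off_sublattice in auto)
  finally show ?thesis
    using M unfolding comb_ft_wrt_def f_def by simp
qed

lemma comb_ok_sum_extend:
  assumes "comb_ok a K c"
  shows "(\<Sum>j<n * K. c (real j * a) * cis (\<theta> * (real j * a))) =
         (\<Sum>i<K. c (real i * a) * cis (\<theta> * (real i * a))) * (\<Sum>q<n. cis (\<theta> * real q * (real K * a)))"
proof -
  have "(\<Sum>j<n * K. c (real j * a) * cis (\<theta> * (real j * a)))
      = (\<Sum>q<n. \<Sum>i<K. c (real i * a + real q * (real K * a)) * cis (\<theta> * (real i * a + real q * (real K * a))))"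
    unfolding sum_lessThan_mult_blocks by (simp add: algebra_simps)
  also have "\<dots> = (\<Sum>q<n. \<Sum>i<K. c (real i * a) * cis (\<theta> * (real i * a)) * cis (\<theta> * real q * (real K * a)))"
    by (simp add: comb_ok_periodic[OF assms] distrib_left mult.assoc flip: cis_mult)
  also have "\<dots> = (\<Sum>i<K. c (real i * a) * cis (\<theta> * (real i * a))) * (\<Sum>q<n. cis (\<theta> * real q * (real K * a)))"
    unfolding sum_product by (rule sum.swap)
  finally show ?thesis .
qed

lemma comb_ft_wrt_extend:
  assumes ok: "comb_ok a K c" and n: "n > 0" and h: "h > 0" and \<sigma>: "\<sigma> \<in> {1, -1}"
  shows "comb_ft_wrt h \<sigma> a (n * K) c p = comb_ft_wrt h \<sigma> a K c p"
proof -
  obtain s :: int where s: "\<sigma> = of_int s" "s \<in> {1, -1}"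
    using \<sigma> by (elim insertE) (auto intro: that[of 1] that[of "-1"])
  define b where "b = real K * a"
  have b: "b > 0"
    using ok by (simp add: comb_ok_iff b_def)
  define d where "d = 2 * pi * h / b"
  have d: "d \<noteq> 0"
    using b h by (simp add: d_def)
  define S where "S = (\<Sum>i<K. c (real i * a) * cis (- \<sigma> * p * (real i * a) / h))"
  define C where "C = 1 / sqrt (2 * pi * h) * d"
  have spacing: "2 * pi * h / (real (n * K) * a) = d / real n"
    by (simp add: d_def b_def mult_ac)
  have lhs: "comb_ft_wrt h \<sigma> a (n * K) c p =
      (if p \<in> lattice (d / real n)
       then complex_of_real (C / real n) * S * (\<Sum>q<n. cis (- \<sigma> * p * real q * b / h)) else 0)"
    using comb_ok_sum_extend[OF ok, where n = n and \<theta> = "- \<sigma> * p / h"]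
    unfolding comb_ft_wrt_def spacing by (simp add: S_def C_def d_def b_def mult.assoc)
  have rhs: "comb_ft_wrt h \<sigma> a K c p = (if p \<in> lattice d then complex_of_real C * S else 0)"
    by (simp add: comb_ft_wrt_def S_def C_def d_def b_def)
  show ?thesis
  proof (cases "p \<in> lattice (d / real n)")
    case False
    then show ?thesis
      unfolding lhs rhs using lattice_subset_refine[OF n] by auto
  next
    case True
    then obtain l :: int where l: "p = d / real n * of_int l"
      unfolding lattice_def by blast
    \<comment> \<open>The n periods contribute a sum over the n-th roots of unity.\<close>
    have "(\<Sum>q<n. cis (- \<sigma> * p * real q * b / h)) =
        (\<Sum>q<n. cis (2 * pi * of_int (- s * l) * real q / real n))"
      using b h by (simp add: l s d_def field_simps)
    also have "\<dots> = (if int n dvd l then of_nat n else 0)"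
      using sum_cis_roots_of_unity[OF n, of "- s * l"] s(2) by auto
    finally have "(\<Sum>q<n. cis (- \<sigma> * p * real q * b / h)) = (if int n dvd l then of_nat n else 0)" .
    moreover have "p \<in> lattice d \<longleftrightarrow> int n dvd l"
      unfolding l by (rule refined_mem_lattice_iff_dvd[OF n d])
    ultimately show ?thesis
      unfolding lhs rhs using True n by simp
  qed
qed

lemma comb_ft_wrt_unique:
  assumes ok1: "comb_ok a K c" and ok2: "comb_ok a' K' c" and h: "h > 0" and \<sigma>: "\<sigma> \<in> {1, -1}"
  shows "comb_ft_wrt h \<sigma> a K c p = comb_ft_wrt h \<sigma> a' K' c p"
proof (cases "\<forall>x. c x = 0")
  case True
  then show ?thesis
    by (simp add: comb_ft_wrt_def)
next
  case False
  then obtain x0 where x0: "c x0 \<noteq> 0"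
    by blast
  have pos: "a > 0" "K > 0" "a' > 0" "K' > 0"
    using ok1 ok2 by (auto simp: comb_ok_iff)
  have "c (x0 + real K * a) \<noteq> 0"
    using ok1 x0 unfolding comb_ok_iff by simp
  then obtain i1 i2 :: int where "x0 = a' * of_int i1" "x0 + real K * a = a' * of_int i2"
    using ok2 x0 unfolding comb_ok_iff lattice_def by (metis rangeE)
  then have Kt: "real K * a = a' * of_int (i2 - i1)"
    by (simp add: algebra_simps)
  define t where "t = nat (i2 - i1)"
  have "a' * of_int (i2 - i1) > 0"
    unfolding Kt[symmetric] using pos by simp
  then have t: "real t = of_int (i2 - i1)" "t > 0"
    using pos by (auto simp: t_def zero_less_mult_iff)
  have "real K * a = a' * real t"
    unfolding t(1) by (rule Kt)
  then have common_refinement: "a / real t = a' / real K"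
    using pos t(2) by (simp add: field_simps mult.commute)
  \<comment> \<open>Both presentations are refined to the spacing a / t = a' / K and extended to the period K K' a'.\<close>
  have "comb_ft_wrt h \<sigma> a K c p = comb_ft_wrt h \<sigma> (a / real t) (t * K) c p"
    by (rule comb_ft_wrt_refine[OF ok1 t(2), symmetric])
  also have "\<dots> = comb_ft_wrt h \<sigma> (a / real t) (K' * (t * K)) c p"
    by (rule comb_ft_wrt_extend[OF comb_ok_refine[OF ok1 t(2)] pos(4) h \<sigma>, symmetric])
  also have "\<dots> = comb_ft_wrt h \<sigma> (a' / real K) (t * (K * K')) c p"
    unfolding common_refinement by (simp add: ac_simps)
  also have "\<dots> = comb_ft_wrt h \<sigma> (a' / real K) (K * K') c p"
    by (rule comb_ft_wrt_extend[OF comb_ok_refine[OF ok2 pos(2)] t(2) h \<sigma>])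
  also have "\<dots> = comb_ft_wrt h \<sigma> a' K' c p"
    by (rule comb_ft_wrt_refine[OF ok2 pos(2)])
  finally show ?thesis .
qed

lemma comb_ft_eq_comb_ft_wrt:
  assumes ok: "comb_ok a K c" and h: "h > 0" and \<sigma>: "\<sigma> \<in> {1, -1}"
  shows "comb_ft h \<sigma> c p = comb_ft_wrt h \<sigma> a K c p"
proof -
  define aK where "aK = (SOME aK. comb_ok (fst aK) (snd aK) c)"
  have "comb_ok (fst aK) (snd aK) c"
    unfolding aK_def by (rule someI[of _ "(a, K)"]) (simp add: ok)
  moreover obtain a0 K0 where aK: "aK = (a0, K0)"
    by fastforce
  moreover have "comb_ft h \<sigma> c p = comb_ft_wrt h \<sigma> a0 K0 c p"
    using ok unfolding comb_ft_def aK_def[symmetric] aK by (auto simp: comb_ft_wrt_def lattice_def Let_def)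
  ultimately show ?thesis
    using comb_ft_wrt_unique[OF _ ok h \<sigma>] by simp
qed

lemma comb_ft_wrt_shift_period:
  assumes a: "a > 0" and K: "K > 0" and h: "h > 0" and \<sigma>: "\<sigma> = of_int s"
  shows "comb_ft_wrt h \<sigma> a K c (p + 2 * pi * h / a) = comb_ft_wrt h \<sigma> a K c p"
proof -
  have "p + 2 * pi * h / a \<in> lattice (2 * pi * h / (real K * a)) \<longleftrightarrow> p \<in> lattice (2 * pi * h / (real K * a))"
    using add_mem_lattice_iff[of p "2 * pi * h / (real K * a)" "int K"] K by simp
  moreover have "cis (- \<sigma> * (p + 2 * pi * h / a) * (real j * a) / h) = cis (- \<sigma> * p * (real j * a) / h)" for j
    by (rule cis_2pi_periodic[where k = "- s * int j"]) (use a h in \<open>simp add: \<sigma> field_simps\<close>)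
  ultimately show ?thesis
    unfolding comb_ft_wrt_def by simp
qed

lemma comb_ok_comb_ft:
  assumes ok: "comb_ok a K c" and h: "h > 0" and \<sigma>: "\<sigma> \<in> {1, -1}"
  shows "comb_ok (2 * pi * h / (real K * a)) K (comb_ft h \<sigma> c)"
proof -
  have pos: "a > 0" "K > 0"
    using ok by (auto simp: comb_ok_iff)
  have \<sigma>_int: "\<sigma> = of_int (if \<sigma> = 1 then 1 else -1)"
    using \<sigma> by auto
  have "p \<in> lattice (2 * pi * h / (real K * a))" if "comb_ft h \<sigma> c p \<noteq> 0" for p
    using that unfolding comb_ft_eq_comb_ft_wrt[OF ok h \<sigma>] comb_ft_wrt_def
    by (auto split: if_splits)
  moreover have "comb_ft h \<sigma> c (p + real K * (2 * pi * h / (real K * a))) = comb_ft h \<sigma> c p" for p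
    using comb_ft_wrt_shift_period[OF pos h \<sigma>_int] pos
    by (simp add: comb_ft_eq_comb_ft_wrt[OF ok h \<sigma>])
  ultimately show ?thesis
    using pos h unfolding comb_ok_iff by auto
qed

lemma comb_ok_restrict:
  assumes ok: "comb_ok a K c" and M: "M > 0" and A: "\<And>x. x + real (M * K) * a \<in> A \<longleftrightarrow> x \<in> A"
  shows "comb_ok a (M * K) (\<lambda>x. if x \<in> A then c x else 0)"
proof -
  have "c (x + real (M * K) * a) = c x" for x
    using comb_ok_periodic[OF ok, of x M] by (simp add: mult.assoc)
  then show ?thesis
    using ok M A unfolding comb_ok_iff by auto
qed

section \<open>The intervals L, R, E and O\<close>

lemma ex_int_shift_mem_iff_frac:
  assumes "0 \<le> a" "b \<le> 1"
  shows "(\<exists>k::int. x - of_int k \<in> {a..<b}) \<longleftrightarrow> frac x \<in> {a..<b}"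
proof
  assume "\<exists>k::int. x - of_int k \<in> {a..<b}"
  then obtain k :: int where k: "x - of_int k \<in> {a..<b}" ..
  then have "frac x = x - of_int k"
    using assms by (auto simp: frac_unique_iff)
  then show "frac x \<in> {a..<b}"
    using k by simp
qed (auto simp: frac_def)

lemma setL_iff_frac: "x \<in> setL \<longleftrightarrow> frac x < 1/2"
  using ex_int_shift_mem_iff_frac[of 0 "1/2" x] by (simp add: setL_def frac_ge_0)

lemma setR_iff_frac: "x \<in> setR \<longleftrightarrow> 1/2 \<le> frac x"
  using ex_int_shift_mem_iff_frac[of "1/2" 1 x] by (simp add: setR_def frac_lt_1)

lemma setE_iff_floor: "x \<in> setE \<longleftrightarrow> even \<lfloor>x\<rfloor>"
proof -
  have "x - 2 * of_int k \<in> {0..<1} \<longleftrightarrow> \<lfloor>x\<rfloor> = 2 * k" for k :: int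
    by (auto simp: floor_eq_iff)
  then show ?thesis
    unfolding setE_def by auto
qed

lemma setO_iff_floor: "x \<in> setO \<longleftrightarrow> odd \<lfloor>x\<rfloor>"
proof -
  have "x - 2 * of_int k \<in> {1..<2} \<longleftrightarrow> \<lfloor>x\<rfloor> = 2 * k + 1" for k :: int
    by (auto simp: floor_eq_iff)
  then show ?thesis
    unfolding setO_def by (auto elim!: oddE)
qed

lemma setR_iff_not_setL: "x \<in> setR \<longleftrightarrow> x \<notin> setL"
  by (auto simp: setL_iff_frac setR_iff_frac)

lemma frac_add_half: "frac (x + 1/2) = (if frac x < 1/2 then frac x + 1/2 else frac x - 1/2)"
  by (simp add: frac_add)

lemma add_half_mem_setL_iff: "x + 1/2 \<in> setL \<longleftrightarrow> x \<in> setR"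
  by (auto simp: setL_iff_frac setR_iff_frac frac_add_half frac_lt_1 not_less frac_ge_0)

lemma add_half_mem_setR_iff: "x + 1/2 \<in> setR \<longleftrightarrow> x \<in> setL"
  using add_half_mem_setL_iff[of x] setR_iff_not_setL by blast

section \<open>The propagator at hbar = 1 / (2 pi N)\<close>

lemma add_half_mem_lattice_iff:
  assumes "N > 0"
  shows "x + 1/2 \<in> lattice (1 / real (2 * N)) \<longleftrightarrow> x \<in> lattice (1 / real (2 * N))"
  using add_mem_lattice_iff[of x "1 / real (2 * N)" "int N"] assms by simp

lemma comb_ft_wrt_one_over_N:
  assumes N: "N > 0" and h: "h = 1 / (2 * pi * real N)"
  shows "comb_ft_wrt h \<sigma> (1 / real N) K c p =
    (if p \<in> lattice (1 / real K) then complex_of_real (sqrt (real N) / real K) *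
       (\<Sum>j<K. c (real j / real N) * cis (- \<sigma> * (2 * pi * real j * p)))
     else 0)"
proof -
  have "2 * pi * h / (real K * (1 / real N)) = 1 / real K"
    using N by (simp add: h)
  moreover have "1 / sqrt (2 * pi * h) * (2 * pi * h / (real K * (1 / real N))) = sqrt (real N) / real K"
    using N by (simp add: h real_sqrt_divide field_simps)
  moreover have "- \<sigma> * p * (real j * (1 / real N)) / h = - \<sigma> * (2 * pi * real j * p)" for j
    using N by (simp add: h field_simps)
  ultimately show ?thesis
    unfolding comb_ft_wrt_def by (simp only: times_divide_eq_right mult_1_right)
qed

lemma sum_two_periods_restrict:
  assumes N: "N > 0" and ok: "comb_ok (1 / real N) N \<psi>"
  shows "(\<Sum>j<2 * N. (if real j / real N \<in> A then \<psi> (real j / real N) else 0) * f j) =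
    (\<Sum>i<N. \<psi> (real i / real N) *
       ((if real i / real N \<in> A then f i else 0) + (if real i / real N + 1 \<in> A then f (i + N) else 0)))"
proof -
  have split: "(\<Sum>j<2 * N. F j) = (\<Sum>i<N. F i + F (i + N))" for F :: "nat \<Rightarrow> complex"
    using sum_lessThan_mult_blocks[of F 2 N] by (simp add: numeral_2_eq_2 sum.distrib)
  have "(real i + real N) / real N = real i / real N + 1" for i
    using N by (simp add: add_divide_distrib)
  moreover have "\<psi> (real i / real N + 1) = \<psi> (real i / real N)" for i
    using comb_ok_periodic[OF ok, of "real i / real N" 1] N by simp
  ultimately show ?thesis
    unfolding split by (intro sum.cong refl) (simp add: distrib_left)
qed

lemma from_mom_restrict_2periodic:
  assumes N: "N > 0" and h: "h = 1 / (2 * pi * real N)" and ok: "comb_ok (1 / real N) N \<psi>"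
    and A: "\<And>y. y + 2 \<in> A \<longleftrightarrow> y \<in> A"
  shows "from_mom h (\<lambda>p. if p \<in> A then \<psi> p else 0) x =
    (if x \<in> lattice (1 / real (2 * N)) then complex_of_real (sqrt (real N) / real (2 * N)) *
       (\<Sum>i<N. \<psi> (real i / real N) *
          ((if real i / real N \<in> A then cis (2 * pi * real i * x) else 0) +
           (if real i / real N + 1 \<in> A then cis (2 * pi * real (i + N) * x) else 0)))
     else 0)"
proof -
  have "comb_ok (1 / real N) (2 * N) (\<lambda>p. if p \<in> A then \<psi> p else 0)"
    using comb_ok_restrict[OF ok, of 2 A] N A by simp
  then have "from_mom h (\<lambda>p. if p \<in> A then \<psi> p else 0) x =
      comb_ft_wrt h (-1) (1 / real N) (2 * N) (\<lambda>p. if p \<in> A then \<psi> p else 0) x"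
    unfolding from_mom_def using N h by (intro comb_ft_eq_comb_ft_wrt) auto
  then show ?thesis
    unfolding comb_ft_wrt_one_over_N[OF N h] using sum_two_periods_restrict[OF N ok] by simp
qed

text \<open>mom_factor h s is E_p + Y^(-1/2) O_p and pos_factor h s is L + X^(-1) R, where
  s = 2 pi N hbar, so that X = X^s and Y = Y^s.\<close>

definition mom_factor :: "real \<Rightarrow> real \<Rightarrow> (real \<Rightarrow> complex) \<Rightarrow> real \<Rightarrow> complex" where
  "mom_factor h s c = (\<lambda>x. mom_proj h setE c x + Ypow (- s / 2) (mom_proj h setO c) x)"

definition pos_factor :: "real \<Rightarrow> real \<Rightarrow> (real \<Rightarrow> complex) \<Rightarrow> real \<Rightarrow> complex" where
  "pos_factor h s c = (\<lambda>x. pos_proj setL c x + Xpow h (- s) (pos_proj setR c) x)"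

lemma Fop_eq_factors:
  "Fop h N c = Sop (pos_factor h (2 * pi * real N * h) (mom_factor h (2 * pi * real N * h) c))"
  by (simp add: Fop_def pos_factor_def mom_factor_def Let_def)

lemma floor_of_nat_div_less:
  assumes "i < N"
  shows "\<lfloor>real i / real N\<rfloor> = 0" "\<lfloor>real i / real N + 1\<rfloor> = 1"
  using assms by (simp_all add: floor_eq_iff)

lemma mom_factor_eq:
  assumes N: "N > 0" and h: "h = 1 / (2 * pi * real N)" and ok: "comb_ok (1 / real N) N c"
  shows "mom_factor h 1 c x =
    (if x \<in> lattice (1 / real (2 * N)) then complex_of_real (sqrt (real N) / real (2 * N)) *
       (\<Sum>i<N. to_mom h c (real i / real N) *
          (cis (2 * pi * real i * x) + cis (2 * pi * real (i + N) * (x - 1/2))))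
     else 0)"
proof -
  have "comb_ok (2 * pi * h / (real N * (1 / real N))) N (to_mom h c)"
    unfolding to_mom_def using N h by (intro comb_ok_comb_ft[OF ok]) auto
  then have ok_mom: "comb_ok (1 / real N) N (to_mom h c)"
    using N by (simp add: h)
  have "y + 2 \<in> setE \<longleftrightarrow> y \<in> setE" "y + 2 \<in> setO \<longleftrightarrow> y \<in> setO" for y
    by (simp_all add: setE_iff_floor setO_iff_floor)
  note from_mom_E_O = from_mom_restrict_2periodic[OF N h ok_mom this(1)]
    from_mom_restrict_2periodic[OF N h ok_mom this(2)]
  have members: "real i / real N \<in> setE" "real i / real N + 1 \<notin> setE"
      "real i / real N \<notin> setO" "real i / real N + 1 \<in> setO" if "i < N" for i
    using floor_of_nat_div_less[OF that] by (simp_all add: setE_iff_floor setO_iff_floor)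
  have "x - 1/2 \<in> lattice (1 / real (2 * N)) \<longleftrightarrow> x \<in> lattice (1 / real (2 * N))"
    using add_half_mem_lattice_iff[OF N, of "x - 1/2"] by simp
  moreover have "(\<Sum>i<N. to_mom h c (real i / real N) *
          ((if real i / real N \<in> setE then cis (2 * pi * real i * y) else 0) +
           (if real i / real N + 1 \<in> setE then cis (2 * pi * real (i + N) * y) else 0))) =
        (\<Sum>i<N. to_mom h c (real i / real N) * cis (2 * pi * real i * y))"
      "(\<Sum>i<N. to_mom h c (real i / real N) *
          ((if real i / real N \<in> setO then cis (2 * pi * real i * y) else 0) +
           (if real i / real N + 1 \<in> setO then cis (2 * pi * real (i + N) * y) else 0))) =
        (\<Sum>i<N. to_mom h c (real i / real N) * cis (2 * pi * real (i + N) * y))" for y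
    by (auto intro!: sum.cong simp: members)
  ultimately show ?thesis
    unfolding mom_factor_def Ypow_def mom_proj_def from_mom_E_O
    by (simp add: distrib_left sum.distrib)
qed

lemma mom_factor_shift_half:
  assumes N: "N > 0" "even N" and h: "h = 1 / (2 * pi * real N)" and ok: "comb_ok (1 / real N) N c"
  shows "mom_factor h 1 c (x + 1/2) = cis (2 * pi * real N * x) * mom_factor h 1 c x"
proof (cases "x \<in> lattice (1 / real (2 * N))")
  case False
  then show ?thesis
    using add_half_mem_lattice_iff[OF N(1)] by (simp add: mom_factor_eq[OF N(1) h ok])
next
  case True
  then obtain r :: int where r: "x = 1 / real (2 * N) * of_int r"
    unfolding lattice_def by blast
  obtain n where n: "N = 2 * n"
    using N(2) by blast
  have "cis (2 * pi * real i * (x + 1/2)) + cis (2 * pi * real (i + N) * x) =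
      cis (2 * pi * real N * x) * (cis (2 * pi * real i * x) + cis (2 * pi * real (i + N) * (x - 1/2)))" for i
  proof -
    \<comment> \<open>The two phases differ by 2 pi (i - 2 N x + N / 2), an integer multiple of 2 pi as N is even.\<close>
    have "cis (2 * pi * real i * (x + 1/2)) = cis (2 * pi * real N * x + 2 * pi * real (i + N) * (x - 1/2))"
      by (rule cis_2pi_periodic[where k = "int i - r + int n"]) (use N in \<open>simp add: r n field_simps\<close>)
    then show ?thesis
      by (simp add: distrib_left cis_mult algebra_simps)
  qed
  then show ?thesis
    using True add_half_mem_lattice_iff[OF N(1)]
    by (simp add: mom_factor_eq[OF N(1) h ok] sum_distrib_left algebra_simps)
qed

lemma pos_factor_shift_half:
  assumes N: "N > 0" "even N" and h: "h = 1 / (2 * pi * real N)"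
    and supp: "\<And>x. g x \<noteq> 0 \<Longrightarrow> x \<in> lattice (1 / real (2 * N))"
    and shift: "\<And>x. g (x + 1/2) = cis (2 * pi * real N * x) * g x"
  shows "pos_factor h 1 g (x + 1/2) = pos_factor h 1 g x"
proof -
  have X: "cis (- 1 * y / h) = cis (- (2 * pi * real N * y))" for y
    using N by (simp add: h mult_ac)
  show ?thesis
  proof (cases "x \<in> setL")
    case True
    obtain n where n: "N = 2 * n"
      using N(2) by blast
    have "cis (- (2 * pi * real N * (x + 1/2))) * cis (2 * pi * real N * x) = 1"
      using cis_2pi_periodic[of "- (2 * pi * real N * (x + 1/2)) + 2 * pi * real N * x" 0 "- int n"]
      by (simp add: cis_mult n algebra_simps)
    then show ?thesis
      using True unfolding pos_factor_def pos_proj_def Xpow_def X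
      by (simp add: add_half_mem_setL_iff add_half_mem_setR_iff setR_iff_not_setL shift mult.assoc[symmetric])
  next
    case False
    have "cis (2 * pi * real N * x) * g x = cis (- (2 * pi * real N * x)) * g x"
    proof (cases "g x = 0")
      case False
      then have "x \<in> lattice (1 / real (2 * N))"
        by (rule supp)
      then obtain r :: int where "x = 1 / real (2 * N) * of_int r"
        unfolding lattice_def by blast
      then have "cis (2 * pi * real N * x) = cis (- (2 * pi * real N * x))"
        using N by (intro cis_2pi_periodic[where k = r]) (simp add: field_simps)
      then show ?thesis
        by simp
    qed simp
    then show ?thesis
      using False unfolding pos_factor_def pos_proj_def Xpow_def X
      by (simp add: add_half_mem_setL_iff add_half_mem_setR_iff setR_iff_not_setL shift)
  qed
qed

lemma Xpow_Sop_eq_if_lattice: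
  assumes N: "N > 0" and h: "h = 1 / (2 * pi * real N)"
    and supp: "\<And>x. f x \<noteq> 0 \<Longrightarrow> x \<in> lattice (1 / real (2 * N))"
  shows "Xpow h 1 (Sop f) = Sop f"
proof
  fix y
  show "Xpow h 1 (Sop f) y = Sop f y"
  proof (cases "f (y / 2) = 0")
    case False
    then have "y / 2 \<in> lattice (1 / real (2 * N))"
      by (rule supp)
    then obtain l :: int where "y / 2 = 1 / real (2 * N) * of_int l"
      unfolding lattice_def by blast
    then have "cis (1 * y / h) = cis 0"
      using N by (intro cis_2pi_periodic[where k = l]) (simp add: h field_simps)
    then show ?thesis
      by (simp add: Xpow_def)
  qed (simp add: Xpow_def Sop_def)
qed

lemma Ypow_Sop_eq_if_shift_half:
  assumes "\<And>x. f (x + 1/2) = f x"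
  shows "Ypow 1 (Sop f) = Sop f"
proof
  fix y
  show "Ypow 1 (Sop f) y = Sop f y"
    using assms[of "y / 2"] by (simp add: Ypow_def Sop_def add_divide_distrib)
qed

lemma comb_ok_Phi:
  assumes N: "N > 0"
  shows "comb_ok (1 / real N) N (Phi N m)"
proof -
  have "x \<in> lattice (1 / real N)" if "Phi N m x \<noteq> 0" for x
  proof -
    obtain k :: int where "x = real m / real N + of_int k"
      using \<open>Phi N m x \<noteq> 0\<close> unfolding Phi_def by (auto split: if_splits)
    then have "x = 1 / real N * of_int (int m + k * int N)"
      using N by (simp add: field_simps)
    then show ?thesis
      unfolding lattice_def by blast
  qed
  moreover have "x + 1 \<in> range (\<lambda>k::int. real m / real N + of_int k) \<longleftrightarrow>
      x \<in> range (\<lambda>k::int. real m / real N + of_int k)" for x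
  proof
    assume "x + 1 \<in> range (\<lambda>k::int. real m / real N + of_int k)"
    then obtain k :: int where "x + 1 = real m / real N + of_int k"
      by blast
    then have "x = real m / real N + of_int (k - 1)"
      by simp
    then show "x \<in> range (\<lambda>k::int. real m / real N + of_int k)"
      by blast
  next
    assume "x \<in> range (\<lambda>k::int. real m / real N + of_int k)"
    then obtain k :: int where "x = real m / real N + of_int k"
      by blast
    then have "x + 1 = real m / real N + of_int (k + 1)"
      by simp
    then show "x + 1 \<in> range (\<lambda>k::int. real m / real N + of_int k)"
      by blast
  qed
  ultimately show ?thesis
    using N unfolding comb_ok_iff by (simp add: Phi_def)
qed

theorem mainTheorem4:
  fixes N m :: nat and hbar :: real
  assumes "N > 0" and "even N" and "hbar = 1 / (2 * pi * real N)" and "m < N"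
  shows "Xpow hbar (2 * pi * real N * hbar) (Fop hbar N (Phi N m)) = Fop hbar N (Phi N m)
       \<and> Ypow (2 * pi * real N * hbar) (Fop hbar N (Phi N m)) = Fop hbar N (Phi N m)"
proof -
  have unit: "2 * pi * real N * hbar = 1"
    using assms(1,3) by simp
  define g where "g = mom_factor hbar 1 (Phi N m)"
  have ok: "comb_ok (1 / real N) N (Phi N m)"
    using comb_ok_Phi[OF assms(1)] .
  have F: "Fop hbar N (Phi N m) = Sop (pos_factor hbar 1 g)"
    unfolding Fop_eq_factors unit g_def ..
  have "g x \<noteq> 0 \<Longrightarrow> x \<in> lattice (1 / real (2 * N))" for x
    unfolding g_def mom_factor_eq[OF assms(1,3) ok] by (auto split: if_splits)
  moreover have "g (x + 1/2) = cis (2 * pi * real N * x) * g x" for x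
    unfolding g_def by (rule mom_factor_shift_half[OF assms(1,2,3) ok])
  ultimately have "pos_factor hbar 1 g x \<noteq> 0 \<Longrightarrow> x \<in> lattice (1 / real (2 * N))"
    and "pos_factor hbar 1 g (x + 1/2) = pos_factor hbar 1 g x" for x
    using pos_factor_shift_half[OF assms(1,2,3)]
    by (auto simp: pos_factor_def pos_proj_def Xpow_def setR_iff_not_setL split: if_splits)
  then show ?thesis
    unfolding unit F by (simp add: Xpow_Sop_eq_if_lattice[OF assms(1,3)] Ypow_Sop_eq_if_shift_half)
qed

end
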